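(* Fix $(\varepsilon,\delta)\in(0,1)\times(0,\delta_0]$ and suppose $\mathcal R^\ast(\varepsilon,\delta|p_{X_1X_2},p_{K_1K_2})\neq\emptyset$. Then for every $\gamma>0$ there exists $n_0=n_0(\gamma)$ such that for all $n\ge n_0$, $$H(X_i|X_{3-i})\le H(K_i)+\gamma+\zeta_n(\gamma,\varepsilon,\delta),\quad i=1,2,$$ $$H(X_1X_2)\le H(K_1K_2)+\gamma+\zeta_n(\gamma,\varepsilon,\delta).$$
   Context: All logarithms are base 2. $\mathcal X_1,\mathcal X_2$ are finite fields. $(X_1,X_2)$ has joint pmf $p_{X_1X_2}$ on $\mathcal X_1\times\mathcal X_2$ and $(K_1,K_2)$ has joint pmf $p_{K_1K_2}$ on $\mathcal X_1\times\mathcal X_2$. For block length $n$, $(\mathbf X_1,\mathbf X_2)$ is i.i.d. with law $p^n_{X_1X_2}$ (source), $(\mathbf K_1,\mathbf K_2)$ is i.i.d. with law $p^n_{K_1K_2}$ (keys), and the keys are independent of the sources. A distributed source encryption system at block length $n$ consists of finite sets $\mathcal C_i^{(n)}$, encryption maps $\Phi_i^{(n)}:\mathcal X_i^n\times\mathcal X_i^n\to\mathcal C_i^{(n)}$ (key, plaintext) and a decryption map $\Psi^{(n)}:\mathcal X_1^n\times\mathcal X_2^n\times\mathcal C_1^{(n)}\times\mathcal C_2^{(n)}\to\mathcal X_1^n\times\mathcal X_2^n$, such that there exist maps $\phi_i^{(n)}:\mathcal X_i^n\to\mathcal M_i^{(n)}$ (finite $\mathcal M_i^{(n)}$) and $\psi^{(n)}$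 with $\Psi^{(n)}(\mathbf k_1,\mathbf k_2,\Phi_1^{(n)}(\mathbf k_1,\mathbf x_1),\Phi_2^{(n)}(\mathbf k_2,\mathbf x_2))=\psi^{(n)}(\phi_1^{(n)}(\mathbf x_1),\phi_2^{(n)}(\mathbf x_2))$ for all keys and plaintexts. Ciphertexts: $C_i^{(n)}=\Phi_i^{(n)}(\mathbf K_i,\mathbf X_i)$. Correct decoding set $\mathcal D^{(n)}:=\{(\mathbf x_1,\mathbf x_2):\psi^{(n)}(\phi_1^{(n)}(\mathbf x_1),\phi_2^{(n)}(\mathbf x_2))=(\mathbf x_1,\mathbf x_2)\}$; error probability $p_{\rm e}:=\Pr[(\mathbf X_1,\mathbf X_2)\notin\mathcal D^{(n)}]$. Fix a constant $\delta_0>0$. For $(\varepsilon,\delta)\in(0,1)\times[0,\delta_0]$, $(R_1,R_2)$ is an $(\varepsilon,\delta)$-reliable and secure rate pair if there is a sequence of systems $\{(\Phi_1^{(n)},\Phi_2^{(n)},\Psi^{(n)})\}_{n\ge1}$ such that for every $\gamma>0$ there is $n_0$ with, for all $n\ge n_0$: $\frac1n\log|\mathcal C_i^{(n)}|\le R_i+\gamma$ ($i=1,2$), $p_{\rm e}\le\varepsilon$, and $I(C_1^{(n)}C_2^{(n)};\mathbf X_1\mathbf X_2)\le\delta$. $\mathcal R^\ast(\varepsilon,\delta|p_{X_1X_2},p_{K_1K_2})$ is the set of such pairs. For $\gamma>0$ let $\tilde{\mathcal A}^{(n)}_\gamma$ be the set of $(\mathbf x_1,\mathbf x_2)\in\mathcal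 X_1^n\times\mathcal X_2^n$ with $\bigl|\frac1n\log\frac1{p^n_{X_i|X_{3-i}}(\mathbf x_i|\mathbf x_{3-i})}-H(X_i|X_{3-i})\bigr|\le\gamma$ for $i=1,2$ and $\bigl|\frac1n\log\frac1{p^n_{X_1X_2}(\mathbf x_1,\mathbf x_2)}-H(X_1X_2)\bigr|\le\gamma$. Set $\nu_n(\gamma):=p^n_{X_1X_2}((\tilde{\mathcal A}^{(n)}_\gamma)^c)$, $\nu_n(\gamma,\varepsilon):=\nu_n(\gamma)+\varepsilon$, and $\zeta_n(\gamma,\varepsilon,\delta):=\frac1n\Bigl[\frac{\delta}{1-\nu_n(\gamma,\varepsilon)}+\log\frac1{1-\nu_n(\gamma,\varepsilon)}\Bigr]$. *)

theory Defs
  imports "HOL-Probability.Probability"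
begin

definition entropy_pmf :: "'a pmf \<Rightarrow> real" where
  "entropy_pmf p = - (\<Sum>x\<in>set_pmf p. pmf p x * log 2 (pmf p x))"

definition cond_entropy_pmf :: "('u \<times> 'v) pmf \<Rightarrow> real" where
  "cond_entropy_pmf q = - (\<Sum>z\<in>set_pmf q. pmf q z * log 2 (pmf q z / pmf (map_pmf snd q) (snd z)))"

definition mutual_info_pmf :: "('u \<times> 'v) pmf \<Rightarrow> real" where
  "mutual_info_pmf q = (\<Sum>z\<in>set_pmf q. pmf q z *
      log 2 (pmf q z / (pmf (map_pmf fst q) (fst z) * pmf (map_pmf snd q) (snd z))))"

definition block_pmf :: "nat \<Rightarrow> ('a \<times> 'b) pmf \<Rightarrow> ('a list \<times> 'b list) pmf" where
  "block_pmf n p = map_pmf (\<lambda>zs. (map fst zs, map snd zs)) (replicate_pmf n p)"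

definition swap_pmf :: "('a \<times> 'b) pmf \<Rightarrow> ('b \<times> 'a) pmf" where
  "swap_pmf p = map_pmf (\<lambda>(a, b). (b, a)) p"

definition cond_block_prob :: "nat \<Rightarrow> ('a \<times> 'b) pmf \<Rightarrow> 'a list \<Rightarrow> 'b list \<Rightarrow> real" where
  "cond_block_prob n p xs ys =
     (\<Prod>i<n. pmf p (xs ! i, ys ! i) / pmf (map_pmf snd p) (ys ! i))"

definition typ_set :: "('a \<times> 'b) pmf \<Rightarrow> nat \<Rightarrow> real \<Rightarrow> ('a list \<times> 'b list) set" where
  "typ_set p n \<gamma> = {(x1, x2). length x1 = n \<and> length x2 = n \<and>
      \<bar>(1 / real n) * log 2 (1 / cond_block_prob n p x1 x2) - cond_entropy_pmf p\<bar> \<le> \<gamma> \<and>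
      \<bar>(1 / real n) * log 2 (1 / cond_block_prob n (swap_pmf p) x2 x1) - cond_entropy_pmf (swap_pmf p)\<bar> \<le> \<gamma> \<and>
      \<bar>(1 / real n) * log 2 (1 / pmf (block_pmf n p) (x1, x2)) - entropy_pmf p\<bar> \<le> \<gamma>}"

definition nu :: "('a \<times> 'b) pmf \<Rightarrow> nat \<Rightarrow> real \<Rightarrow> real" where
  "nu p n \<gamma> = measure_pmf.prob (block_pmf n p) (- typ_set p n \<gamma>)"

definition nu_eps :: "('a \<times> 'b) pmf \<Rightarrow> nat \<Rightarrow> real \<Rightarrow> real \<Rightarrow> real" where
  "nu_eps p n \<gamma> \<epsilon> = nu p n \<gamma> + \<epsilon>"

definition zeta :: "('a \<times> 'b) pmf \<Rightarrow> nat \<Rightarrow> real \<Rightarrow> real \<Rightarrow> real \<Rightarrow> real" where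
  "zeta p n \<gamma> \<epsilon> \<delta> = (1 / real n) *
     (\<delta> / (1 - nu_eps p n \<gamma> \<epsilon>) + log 2 (1 / (1 - nu_eps p n \<gamma> \<epsilon>)))"

text \<open>Ciphertext alphabets C_i^{(n)} and message alphabets M_i^{(n)} are finite sets of
  naturals (any finite set can be encoded injectively into nat).  Encryption maps take
  (key, plaintext).\<close>
definition is_system ::
  "nat \<Rightarrow> nat set \<Rightarrow> nat set \<Rightarrow>
   ('a list \<Rightarrow> 'a list \<Rightarrow> nat) \<Rightarrow> ('b list \<Rightarrow> 'b list \<Rightarrow> nat) \<Rightarrow>
   ('a list \<Rightarrow> 'b list \<Rightarrow> nat \<Rightarrow> nat \<Rightarrow> 'a list \<times> 'b list) \<Rightarrow>
   nat set \<Rightarrow> nat set \<Rightarrow> ('a list \<Rightarrow> nat) \<Rightarrow> ('b list \<Rightarrow> nat) \<Rightarrow>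
   (nat \<Rightarrow> nat \<Rightarrow> 'a list \<times> 'b list) \<Rightarrow> bool" where
  "is_system n C1 C2 Enc1 Enc2 Dec M1 M2 ph1 ph2 ps \<longleftrightarrow>
     finite C1 \<and> finite C2 \<and> finite M1 \<and> finite M2 \<and>
     (\<forall>k x. length k = n \<and> length x = n \<longrightarrow> Enc1 k x \<in> C1) \<and>
     (\<forall>k x. length k = n \<and> length x = n \<longrightarrow> Enc2 k x \<in> C2) \<and>
     (\<forall>x. length x = n \<longrightarrow> ph1 x \<in> M1) \<and>
     (\<forall>x. length x = n \<longrightarrow> ph2 x \<in> M2) \<and>
     (\<forall>k1 k2 x1 x2. length k1 = n \<and> length k2 = n \<and> length x1 = n \<and> length x2 = n \<longrightarrow>
        Dec k1 k2 (Enc1 k1 x1) (Enc2 k2 x2) = ps (ph1 x1) (ph2 x2))"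

definition cipher_source_pmf ::
  "nat \<Rightarrow> ('a \<times> 'b) pmf \<Rightarrow> ('a \<times> 'b) pmf \<Rightarrow>
   ('a list \<Rightarrow> 'a list \<Rightarrow> nat) \<Rightarrow> ('b list \<Rightarrow> 'b list \<Rightarrow> nat) \<Rightarrow>
   ((nat \<times> nat) \<times> ('a list \<times> 'b list)) pmf" where
  "cipher_source_pmf n pX pK Enc1 Enc2 =
     do { (x1, x2) \<leftarrow> block_pmf n pX;
          (k1, k2) \<leftarrow> block_pmf n pK;
          return_pmf ((Enc1 k1 x1, Enc2 k2 x2), (x1, x2)) }"

definition error_prob ::
  "nat \<Rightarrow> ('a \<times> 'b) pmf \<Rightarrow> ('a list \<Rightarrow> nat) \<Rightarrow> ('b list \<Rightarrow> nat) \<Rightarrow>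
   (nat \<Rightarrow> nat \<Rightarrow> 'a list \<times> 'b list) \<Rightarrow> real" where
  "error_prob n pX ph1 ph2 ps =
     measure_pmf.prob (block_pmf n pX) {(x1, x2). ps (ph1 x1) (ph2 x2) \<noteq> (x1, x2)}"

definition rate_region :: "real \<Rightarrow> real \<Rightarrow> ('a \<times> 'b) pmf \<Rightarrow> ('a \<times> 'b) pmf \<Rightarrow> (real \<times> real) set" where
  "rate_region \<epsilon> \<delta> pX pK = {(R1, R2).
     \<exists>(C1 :: nat \<Rightarrow> nat set) (C2 :: nat \<Rightarrow> nat set)
      (Enc1 :: nat \<Rightarrow> 'a list \<Rightarrow> 'a list \<Rightarrow> nat) (Enc2 :: nat \<Rightarrow> 'b list \<Rightarrow> 'b list \<Rightarrow> nat)
      (Dec :: nat \<Rightarrow> 'a list \<Rightarrow> 'b list \<Rightarrow> nat \<Rightarrow> nat \<Rightarrow> 'a list \<times> 'b list)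
      (M1 :: nat \<Rightarrow> nat set) (M2 :: nat \<Rightarrow> nat set)
      (ph1 :: nat \<Rightarrow> 'a list \<Rightarrow> nat) (ph2 :: nat \<Rightarrow> 'b list \<Rightarrow> nat)
      (ps :: nat \<Rightarrow> nat \<Rightarrow> nat \<Rightarrow> 'a list \<times> 'b list).
       (\<forall>n\<ge>1. is_system n (C1 n) (C2 n) (Enc1 n) (Enc2 n) (Dec n) (M1 n) (M2 n) (ph1 n) (ph2 n) (ps n)) \<and>
       (\<forall>\<gamma>>0. \<exists>n0. \<forall>n\<ge>n0.
          (1 / real n) * log 2 (real (card (C1 n))) \<le> R1 + \<gamma> \<and>
          (1 / real n) * log 2 (real (card (C2 n))) \<le> R2 + \<gamma> \<and>
          error_prob n pX (ph1 n) (ph2 n) (ps n) \<le> \<epsilon> \<and>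
          mutual_info_pmf (cipher_source_pmf n pX pK (Enc1 n) (Enc2 n)) \<le> \<delta>)}"

end

theory Submission
  imports Defs
begin

text \<open>Let \<open>E\<close> be the set of typical source blocks that the legitimate receiver decodes correctly;
  by the union bound \<open>Pr(E) \<ge> 1 - \<nu>\<^sub>n(\<gamma>) - \<epsilon>\<close>, which stays positive for large \<open>n\<close> since
  Chebyshev's inequality makes \<open>\<nu>\<^sub>n(\<gamma>) \<rightarrow> 0\<close>. On \<open>E\<close> the source block is a function of the key and
  the ciphertext (for the conditional bounds: of one key component, one ciphertext component and
  the other source component). Gibbs' inequality on \<open>E \<times> keys\<close> against a suitable reference
  measure then yields the one-shot bound
  \<open>\<Sum>x\<in>E. p(x) log (Pr(E) \<mu>(\<pi> x) / p(x)) \<le> Pr(E) H(\<kappa>(K)) + I(C;X)\<close>,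
  where \<open>\<pi> x\<close> is the side information and \<open>\<kappa>(K)\<close> the part of the key used.
  Typicality bounds each \<open>log (\<mu>(\<pi> x) / p(x))\<close> below by \<open>n (H - \<gamma>)\<close>, the key entropy is \<open>n H(K)\<close>
  and \<open>I(C;X) \<le> \<delta>\<close>; dividing by \<open>n Pr(E)\<close> gives the three inequalities.\<close>

section \<open>Finite expectations and Gibbs' inequality\<close>

text \<open>Finite sums in place of \<open>measure_pmf.expectation\<close>: every pmf below has finite support,
  and sums avoid integrability side conditions.\<close>

definition expect_pmf :: "'a pmf \<Rightarrow> ('a \<Rightarrow> real) \<Rightarrow> real" where
  "expect_pmf p f = (\<Sum>x\<in>set_pmf p. pmf p x * f x)"

lemma expect_pmf_cong: "(\<And>x. x \<in> set_pmf p \<Longrightarrow> f x = g x) \<Longrightarrow> expect_pmf p f = expect_pmf p g"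
  unfolding expect_pmf_def by (intro sum.cong) auto

lemma expect_pmf_return [simp]: "expect_pmf (return_pmf a) f = f a"
  by (simp add: expect_pmf_def)

lemma expect_pmf_add: "expect_pmf p (\<lambda>x. f x + g x) = expect_pmf p f + expect_pmf p g"
  by (simp add: expect_pmf_def sum.distrib algebra_simps)

lemma expect_pmf_diff: "expect_pmf p (\<lambda>x. f x - g x) = expect_pmf p f - expect_pmf p g"
  by (simp add: expect_pmf_def sum_subtractf algebra_simps)

lemma expect_pmf_cmult: "expect_pmf p (\<lambda>x. c * f x) = c * expect_pmf p f"
  by (simp add: expect_pmf_def sum_distrib_left algebra_simps)

lemma expect_pmf_const: "finite (set_pmf p) \<Longrightarrow> expect_pmf p (\<lambda>x. c) = c"
  by (simp add: expect_pmf_def sum_distrib_right[symmetric] sum_pmf_eq_1)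

lemma expect_pmf_superset:
  assumes "finite A" "set_pmf p \<subseteq> A"
  shows "expect_pmf p f = (\<Sum>x\<in>A. pmf p x * f x)"
  unfolding expect_pmf_def using assms by (intro sum.mono_neutral_left) (auto simp: set_pmf_eq)

lemma pmf_bind_finite:
  assumes "finite (set_pmf p)"
  shows "pmf (bind_pmf p h) y = (\<Sum>x\<in>set_pmf p. pmf p x * pmf (h x) y)"
  unfolding pmf_bind using assms
  by (subst integral_measure_pmf_real[where A="set_pmf p"]) (auto simp: mult.commute)

lemma expect_pmf_bind:
  assumes "finite (set_pmf p)" "\<And>x. x \<in> set_pmf p \<Longrightarrow> finite (set_pmf (h x))"
  shows "expect_pmf (bind_pmf p h) f = expect_pmf p (\<lambda>x. expect_pmf (h x) f)"
proof -
  let ?U = "set_pmf (bind_pmf p h)"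
  have "finite ?U" using assms by (simp add: set_bind_pmf)
  have "expect_pmf (bind_pmf p h) f = (\<Sum>y\<in>?U. (\<Sum>x\<in>set_pmf p. pmf p x * pmf (h x) y) * f y)"
    unfolding expect_pmf_def using assms(1) by (simp add: pmf_bind_finite)
  also have "\<dots> = (\<Sum>x\<in>set_pmf p. pmf p x * (\<Sum>y\<in>?U. pmf (h x) y * f y))"
    unfolding sum_distrib_right sum_distrib_left
    by (rule trans[OF sum.swap]) (simp add: algebra_simps)
  also have "\<dots> = (\<Sum>x\<in>set_pmf p. pmf p x * expect_pmf (h x) f)"
  proof (intro sum.cong refl arg_cong2[where f="(*)"])
    fix x assume "x \<in> set_pmf p"
    then show "(\<Sum>y\<in>?U. pmf (h x) y * f y) = expect_pmf (h x) f"
      using expect_pmf_superset[OF \<open>finite ?U\<close>, of "h x" f] by (force simp: set_bind_pmf)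
  qed
  finally show ?thesis by (simp add: expect_pmf_def)
qed

lemma expect_pmf_map:
  "finite (set_pmf p) \<Longrightarrow> expect_pmf (map_pmf g p) f = expect_pmf p (\<lambda>x. f (g x))"
  unfolding map_pmf_def by (subst expect_pmf_bind) (auto simp: expect_pmf_def)

lemma entropy_pmf_eq_expect: "entropy_pmf p = expect_pmf p (\<lambda>x. - log 2 (pmf p x))"
  by (simp add: entropy_pmf_def expect_pmf_def sum_negf)

lemma entropy_pmf_map_inj:
  "finite (set_pmf p) \<Longrightarrow> inj f \<Longrightarrow> entropy_pmf (map_pmf f p) = entropy_pmf p"
  by (simp add: entropy_pmf_eq_expect expect_pmf_map pmf_map_inj')

lemma mult_log_ratio_ge:
  fixes a b :: real
  assumes "0 \<le> a" "0 \<le> b" "0 < a \<Longrightarrow> 0 < b"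
  shows "(a - b) / ln 2 \<le> a * log 2 (a / b)"
proof (cases "a = 0")
  case True
  then show ?thesis using assms by (simp add: divide_nonpos_pos)
next
  case False
  with assms have "0 < a" "0 < b" by simp_all
  then have "a * ln (b / a) \<le> b - a"
    using ln_le_minus_one[of "b / a"] by (simp add: field_simps)
  moreover have "ln (a / b) = - ln (b / a)" using \<open>0 < a\<close> \<open>0 < b\<close> by (simp add: ln_div)
  ultimately have "a - b \<le> a * ln (a / b)" by simp
  then have "(a - b) / ln 2 \<le> a * ln (a / b) / ln 2" by (rule divide_right_mono) simp
  then show ?thesis by (simp add: log_def)
qed

lemma gibbs_inequality:
  fixes a b :: "'t \<Rightarrow> real"
  assumes "finite T" "\<And>t. t \<in> T \<Longrightarrow> 0 \<le> a t" "\<And>t. t \<in> T \<Longrightarrow> 0 \<le> b t"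
    "\<And>t. t \<in> T \<Longrightarrow> 0 < a t \<Longrightarrow> 0 < b t" "sum b T \<le> sum a T"
  shows "0 \<le> (\<Sum>t\<in>T. a t * log 2 (a t / b t))"
proof -
  have "0 \<le> (\<Sum>t\<in>T. (a t - b t) / ln 2)"
    using assms(5) by (simp add: sum_divide_distrib[symmetric] sum_subtractf)
  also have "\<dots> \<le> (\<Sum>t\<in>T. a t * log 2 (a t / b t))"
    using assms by (intro sum_mono mult_log_ratio_ge) auto
  finally show ?thesis .
qed

lemma divergence_nonneg:
  assumes "finite (set_pmf w)" "set_pmf q \<subseteq> set_pmf w"
  shows "0 \<le> (\<Sum>c\<in>set_pmf q. pmf q c * log 2 (pmf q c / pmf w c))"
proof (rule gibbs_inequality)
  show "finite (set_pmf q)" using assms finite_subset by blast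
  have "sum (pmf w) (set_pmf q) \<le> sum (pmf w) (set_pmf w)"
    using assms by (intro sum_mono2) auto
  also have "\<dots> = sum (pmf q) (set_pmf q)"
    using assms \<open>finite (set_pmf q)\<close> by (simp add: sum_pmf_eq_1)
  finally show "sum (pmf w) (set_pmf q) \<le> sum (pmf q) (set_pmf q)" .
qed (use assms in \<open>auto simp: pmf_positive\<close>)

lemma pmf_le_pmf_map: "pmf p j \<le> pmf (map_pmf g p) (g j)"
proof -
  have "pmf p j = measure_pmf.prob p {j}" by (simp add: measure_pmf_single)
  also have "\<dots> \<le> measure_pmf.prob p (g -` {g j})"
    by (rule measure_pmf.finite_measure_mono) auto
  finally show ?thesis by (simp add: pmf_map)
qed

text \<open>For fixed \<open>d\<close>, the events \<open>{j. f j x = d}\<close> for \<open>x\<close> in one fibre of \<open>\<pi>\<close> are pairwise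
  disjoint, so each fibre \<open>y\<close> contributes at most \<open>pmf \<mu> y\<close>.\<close>

lemma packing_sum_le_one:
  fixes \<rho> :: "'j pmf" and \<mu> :: "'y pmf" and \<pi> :: "'x \<Rightarrow> 'y" and f :: "'j \<Rightarrow> 'x \<Rightarrow> 'd"
  assumes "finite E"
    and inj: "\<And>x x' j. x \<in> E \<Longrightarrow> x' \<in> E \<Longrightarrow> j \<in> set_pmf \<rho> \<Longrightarrow> \<pi> x = \<pi> x' \<Longrightarrow>
      f j x = d \<Longrightarrow> f j x' = d \<Longrightarrow> x = x'"
  shows "(\<Sum>x\<in>E. pmf \<mu> (\<pi> x) * measure_pmf.prob \<rho> {j. f j x = d}) \<le> 1"
proof -
  let ?M = "\<lambda>x. measure_pmf.prob \<rho> {j. f j x = d}"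
  have fibre: "(\<Sum>x\<in>{x\<in>E. \<pi> x = y}. ?M x) \<le> 1" for y
  proof -
    let ?A = "\<lambda>x. {j. f j x = d} \<inter> set_pmf \<rho>"
    have "(\<Sum>x\<in>{x\<in>E. \<pi> x = y}. ?M x) = (\<Sum>x\<in>{x\<in>E. \<pi> x = y}. measure_pmf.prob \<rho> (?A x))"
      by (simp add: measure_Int_set_pmf)
    also have "\<dots> = measure_pmf.prob \<rho> (\<Union>x\<in>{x\<in>E. \<pi> x = y}. ?A x)"
    proof (rule measure_finite_Union[symmetric])
      show "disjoint_family_on ?A {x\<in>E. \<pi> x = y}"
        unfolding disjoint_family_on_def using inj by blast
    qed (use \<open>finite E\<close> in \<open>auto simp: measure_pmf.emeasure_eq_measure\<close>)
    finally show ?thesis by simp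
  qed
  have "(\<Sum>x\<in>E. pmf \<mu> (\<pi> x) * ?M x) = (\<Sum>y\<in>\<pi>`E. \<Sum>x\<in>{x\<in>E. \<pi> x = y}. pmf \<mu> (\<pi> x) * ?M x)"
    using \<open>finite E\<close> by (rule sum.image_gen)
  also have "\<dots> = (\<Sum>y\<in>\<pi>`E. pmf \<mu> y * (\<Sum>x\<in>{x\<in>E. \<pi> x = y}. ?M x))"
    by (simp add: sum_distrib_left)
  also have "\<dots> \<le> (\<Sum>y\<in>\<pi>`E. pmf \<mu> y)"
    using fibre by (intro sum_mono) (simp add: mult_left_le)
  also have "\<dots> = measure_pmf.prob \<mu> (\<pi>`E)"
    using \<open>finite E\<close> by (simp add: measure_measure_pmf_finite)
  finally show ?thesis by (meson measure_pmf.prob_le_1 order_trans)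
qed

section \<open>I.i.d. blocks and the weak law of large numbers\<close>

lemma pmf_replicate_pmf:
  "pmf (replicate_pmf n q) xs = (if length xs = n then (\<Prod>i<n. pmf q (xs!i)) else 0)"
proof (induction n arbitrary: xs)
  case 0
  then show ?case by (cases xs) auto
next
  case (Suc n)
  have rep: "replicate_pmf (Suc n) q = map_pmf (\<lambda>(x, xs). x # xs) (pair_pmf q (replicate_pmf n q))"
    by (simp add: pair_pmf_def map_bind_pmf)
  have inj: "inj (\<lambda>(x::'a, xs). x # xs)"
    by (auto simp: inj_def)
  show ?case
  proof (cases xs)
    case Nil
    then show ?thesis unfolding rep pmf_map by (simp add: vimage_def case_prod_beta)
  next
    case (Cons y ys)
    have "pmf (replicate_pmf (Suc n) q) xs = pmf q y * pmf (replicate_pmf n q) ys"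
      unfolding rep Cons using pmf_map_inj'[OF inj, of _ "(y, ys)"] by (simp add: pmf_pair)
    then show ?thesis
      using Suc.IH[of ys] Cons by (simp add: prod.lessThan_Suc_shift del: prod.lessThan_Suc)
  qed
qed

lemma finite_set_replicate_pmf: "finite (set_pmf q) \<Longrightarrow> finite (set_pmf (replicate_pmf n q))"
  unfolding set_replicate_pmf lists_eq_set
  by (rule finite_subset[OF _ finite_lists_length_eq[of "set_pmf q" n]]) auto

lemma map_pmf_map_replicate_pmf:
  "map_pmf (map f) (replicate_pmf n q) = replicate_pmf n (map_pmf f q)"
proof (induction n)
  case (Suc n)
  show ?case by (simp add: map_bind_pmf bind_map_pmf flip: Suc.IH)
qed simp

lemma expect_pmf_replicate_pmf_Suc:
  assumes "finite (set_pmf q)"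
  shows "expect_pmf (replicate_pmf (Suc n) q) F =
    expect_pmf q (\<lambda>x. expect_pmf (replicate_pmf n q) (\<lambda>xs. F (x # xs)))"
proof -
  have "finite (set_pmf (replicate_pmf n q))" using assms by (rule finite_set_replicate_pmf)
  then show ?thesis
    using assms by (simp add: expect_pmf_bind set_bind_pmf del: bind_return_pmf')
qed

lemma entropy_replicate_pmf:
  assumes "finite (set_pmf q)"
  shows "entropy_pmf (replicate_pmf n q) = real n * entropy_pmf q"
proof (induction n)
  case 0
  then show ?case by (simp add: entropy_pmf_eq_expect)
next
  case (Suc n)
  let ?R = "replicate_pmf n q"
  have "finite (set_pmf ?R)" using assms by (rule finite_set_replicate_pmf)
  have "entropy_pmf (replicate_pmf (Suc n) q) =
      expect_pmf q (\<lambda>x. expect_pmf ?R (\<lambda>xs. - log 2 (pmf (replicate_pmf (Suc n) q) (x # xs))))"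
    by (rule trans[OF entropy_pmf_eq_expect expect_pmf_replicate_pmf_Suc[OF assms]])
  also have "\<dots> = expect_pmf q (\<lambda>x. expect_pmf ?R (\<lambda>xs. - log 2 (pmf q x) + - log 2 (pmf ?R xs)))"
  proof (intro expect_pmf_cong)
    fix x xs assume x: "x \<in> set_pmf q" and xs: "xs \<in> set_pmf ?R"
    have "pmf (replicate_pmf (Suc n) q) (x # xs) = pmf q x * pmf ?R xs"
      using xs by (simp add: pmf_replicate_pmf set_replicate_pmf prod.lessThan_Suc_shift
          del: replicate_pmf.simps prod.lessThan_Suc)
    then show "- log 2 (pmf (replicate_pmf (Suc n) q) (x # xs)) = - log 2 (pmf q x) + - log 2 (pmf ?R xs)"
      using pmf_positive[OF x] pmf_positive[OF xs] by (simp add: log_mult del: replicate_pmf.simps)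
  qed
  also have "\<dots> = entropy_pmf q + entropy_pmf ?R"
    using \<open>finite (set_pmf ?R)\<close> assms
    by (simp only: expect_pmf_add expect_pmf_const entropy_pmf_eq_expect[symmetric])
  finally show ?case using Suc.IH by (simp add: algebra_simps)
qed

lemma inj_unzip: "inj (\<lambda>zs. (map fst zs, map snd zs))"
proof (intro injI)
  fix xs ys :: "('a \<times> 'b) list"
  assume "(map fst xs, map snd xs) = (map fst ys, map snd ys)"
  then have "zip (map fst xs) (map snd xs) = zip (map fst ys) (map snd ys)" by simp
  then show "xs = ys" by (simp add: zip_map_fst_snd)
qed

lemma finite_set_block_pmf: "finite (set_pmf p) \<Longrightarrow> finite (set_pmf (block_pmf n p))"
  unfolding block_pmf_def by (simp add: finite_set_replicate_pmf)

lemma length_set_block_pmf: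
  "(xs, ys) \<in> set_pmf (block_pmf n p) \<Longrightarrow> length xs = n \<and> length ys = n"
  unfolding block_pmf_def by (auto simp: set_replicate_pmf)

lemma pmf_block_pmf:
  assumes "length xs = n" "length ys = n"
  shows "pmf (block_pmf n p) (xs, ys) = (\<Prod>i<n. pmf p (xs!i, ys!i))"
proof -
  have "(xs, ys) = (\<lambda>zs. (map fst zs, map snd zs)) (zip xs ys)" using assms by simp
  then have "pmf (block_pmf n p) (xs, ys) = pmf (replicate_pmf n p) (zip xs ys)"
    unfolding block_pmf_def by (simp only: pmf_map_inj'[OF inj_unzip])
  then show ?thesis using assms by (simp add: pmf_replicate_pmf)
qed

lemma map_fst_block_pmf: "map_pmf fst (block_pmf n p) = replicate_pmf n (map_pmf fst p)"
  unfolding block_pmf_def by (simp add: map_pmf_comp flip: map_pmf_map_replicate_pmf)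

lemma map_snd_block_pmf: "map_pmf snd (block_pmf n p) = replicate_pmf n (map_pmf snd p)"
  unfolding block_pmf_def by (simp add: map_pmf_comp flip: map_pmf_map_replicate_pmf)

lemma entropy_block_pmf:
  "finite (set_pmf p) \<Longrightarrow> entropy_pmf (block_pmf n p) = real n * entropy_pmf p"
  unfolding block_pmf_def
  by (simp add: entropy_pmf_map_inj inj_unzip finite_set_replicate_pmf entropy_replicate_pmf)

lemma expect_pmf_replicate_pmf_sum:
  assumes "finite (set_pmf q)"
  shows "expect_pmf (replicate_pmf n q) (\<lambda>zs. \<Sum>i<n. h (zs!i)) = real n * expect_pmf q h"
proof (induction n)
  case (Suc n)
  have "finite (set_pmf (replicate_pmf n q))" using assms by (rule finite_set_replicate_pmf)
  then show ?case
    using assms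
    by (simp only: expect_pmf_replicate_pmf_Suc sum.lessThan_Suc_shift nth_Cons_0 nth_Cons_Suc
        expect_pmf_add expect_pmf_const Suc.IH) (simp add: algebra_simps)
qed simp

lemma expect_pmf_replicate_pmf_sum_square:
  assumes "finite (set_pmf q)" and "expect_pmf q h = 0"
  shows "expect_pmf (replicate_pmf n q) (\<lambda>zs. (\<Sum>i<n. h (zs!i))\<^sup>2) = real n * expect_pmf q (\<lambda>z. (h z)\<^sup>2)"
proof (induction n)
  case (Suc n)
  let ?S = "\<lambda>xs. \<Sum>i<n. h (xs!i)"
  have "finite (set_pmf (replicate_pmf n q))" using assms(1) by (rule finite_set_replicate_pmf)
  have "expect_pmf (replicate_pmf (Suc n) q) (\<lambda>zs. (\<Sum>i<Suc n. h (zs!i))\<^sup>2)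
      = expect_pmf q (\<lambda>x. expect_pmf (replicate_pmf n q) (\<lambda>xs. (h x)\<^sup>2 + 2 * h x * ?S xs + (?S xs)\<^sup>2))"
    unfolding expect_pmf_replicate_pmf_Suc[OF assms(1)] sum.lessThan_Suc_shift
    by (simp add: power2_eq_square algebra_simps)
  also have "\<dots> = expect_pmf q (\<lambda>x. (h x)\<^sup>2 + 2 * h x * (real n * expect_pmf q h)
      + real n * expect_pmf q (\<lambda>z. (h z)\<^sup>2))"
    using \<open>finite (set_pmf (replicate_pmf n q))\<close>
    by (simp only: expect_pmf_add expect_pmf_cmult expect_pmf_const Suc.IH
        expect_pmf_replicate_pmf_sum[OF assms(1)])
  also have "\<dots> = expect_pmf q (\<lambda>z. (h z)\<^sup>2) + real n * expect_pmf q (\<lambda>z. (h z)\<^sup>2)"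
    by (simp only: assms(2) expect_pmf_add expect_pmf_const[OF assms(1)]) (simp add: expect_pmf_def)
  finally show ?case by (simp add: algebra_simps)
qed simp

lemma prob_abs_ge_le_second_moment:
  assumes "finite (set_pmf M)" "0 < t"
  shows "measure_pmf.prob M {z. t \<le> \<bar>S z\<bar>} \<le> expect_pmf M (\<lambda>z. (S z)\<^sup>2) / t\<^sup>2"
proof -
  let ?A = "{z. t \<le> \<bar>S z\<bar>} \<inter> set_pmf M"
  have "measure_pmf.prob M {z. t \<le> \<bar>S z\<bar>} = measure_pmf.prob M ?A"
    by (simp add: measure_Int_set_pmf)
  also have "\<dots> = (\<Sum>z\<in>?A. pmf M z)"
    using assms by (simp add: measure_measure_pmf_finite)
  also have "\<dots> \<le> (\<Sum>z\<in>?A. pmf M z * ((S z)\<^sup>2 / t\<^sup>2))"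
  proof (intro sum_mono)
    fix z assume "z \<in> ?A"
    then have "t \<le> \<bar>S z\<bar>" by simp
    then have "t\<^sup>2 \<le> (S z)\<^sup>2"
      using assms(2) by (metis abs_ge_zero abs_of_pos power2_abs power_mono)
    then have "1 \<le> (S z)\<^sup>2 / t\<^sup>2" using assms(2) by simp
    then show "pmf M z \<le> pmf M z * ((S z)\<^sup>2 / t\<^sup>2)"
      using mult_left_mono[of 1 "(S z)\<^sup>2 / t\<^sup>2" "pmf M z"] by simp
  qed
  also have "\<dots> \<le> (\<Sum>z\<in>set_pmf M. pmf M z * ((S z)\<^sup>2 / t\<^sup>2))"
    using assms by (intro sum_mono2) auto
  also have "\<dots> = expect_pmf M (\<lambda>z. (S z)\<^sup>2) / t\<^sup>2"
    by (simp add: expect_pmf_def sum_divide_distrib)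
  finally show ?thesis .
qed

lemma replicate_pmf_weak_law:
  assumes "finite (set_pmf q)" "0 < \<gamma>" "0 < n"
  shows "measure_pmf.prob (replicate_pmf n q)
      {zs. \<gamma> < \<bar>(1 / real n) * (\<Sum>i<n. g (zs!i)) - expect_pmf q g\<bar>}
    \<le> expect_pmf q (\<lambda>z. (g z - expect_pmf q g)\<^sup>2) / (real n * \<gamma>\<^sup>2)"
proof -
  define h where "h z = g z - expect_pmf q g" for z
  have "expect_pmf q h = 0"
    unfolding h_def expect_pmf_diff expect_pmf_const[OF assms(1)] by simp
  have "(\<Sum>i<n. h (zs!i)) = real n * ((1 / real n) * (\<Sum>i<n. g (zs!i)) - expect_pmf q g)" for zs
    unfolding h_def using assms(3) by (simp add: sum_subtractf algebra_simps)
  then have "{zs. \<gamma> < \<bar>(1 / real n) * (\<Sum>i<n. g (zs!i)) - expect_pmf q g\<bar>}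
      \<subseteq> {zs. real n * \<gamma> \<le> \<bar>\<Sum>i<n. h (zs!i)\<bar>}"
    using assms(3) by (auto simp: abs_mult)
  then have "measure_pmf.prob (replicate_pmf n q)
        {zs. \<gamma> < \<bar>(1 / real n) * (\<Sum>i<n. g (zs!i)) - expect_pmf q g\<bar>}
      \<le> measure_pmf.prob (replicate_pmf n q) {zs. real n * \<gamma> \<le> \<bar>\<Sum>i<n. h (zs!i)\<bar>}"
    by (intro measure_pmf.finite_measure_mono) auto
  also have "\<dots> \<le> expect_pmf (replicate_pmf n q) (\<lambda>zs. (\<Sum>i<n. h (zs!i))\<^sup>2) / (real n * \<gamma>)\<^sup>2"
    using assms by (intro prob_abs_ge_le_second_moment finite_set_replicate_pmf) simp_all
  also have "\<dots> = expect_pmf q (\<lambda>z. (h z)\<^sup>2) / (real n * \<gamma>\<^sup>2)"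
    using assms(3)
    by (simp only: expect_pmf_replicate_pmf_sum_square[OF assms(1) \<open>expect_pmf q h = 0\<close>])
      (simp add: power2_eq_square)
  finally show ?thesis unfolding h_def .
qed

section \<open>Typical sets\<close>

definition cond_info :: "('u \<times> 'v) pmf \<Rightarrow> 'u \<times> 'v \<Rightarrow> real" where
  "cond_info p z = - log 2 (pmf p z / pmf (map_pmf snd p) (snd z))"

lemma expect_pmf_cond_info: "expect_pmf p (cond_info p) = cond_entropy_pmf p"
  by (simp add: expect_pmf_def cond_info_def cond_entropy_pmf_def sum_negf)

lemma pmf_swap_pmf: "pmf (swap_pmf p) (b, a) = pmf p (a, b)"
  unfolding swap_pmf_def using pmf_map_inj'[OF swap_inj_on, of p "(a, b)"] by simp

lemma expect_pmf_swap_pmf: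
  "finite (set_pmf p) \<Longrightarrow> expect_pmf (swap_pmf p) f = expect_pmf p (\<lambda>z. f (snd z, fst z))"
  by (simp add: swap_pmf_def expect_pmf_map case_prod_beta)

lemma map_snd_swap_pmf: "map_pmf snd (swap_pmf p) = map_pmf fst p"
  unfolding swap_pmf_def map_pmf_comp by (simp add: case_prod_beta)

lemma log_inverse_prod:
  fixes f :: "'i \<Rightarrow> real"
  assumes "finite I" "\<And>i. i \<in> I \<Longrightarrow> 0 < f i"
  shows "log 2 (1 / prod f I) = (\<Sum>i\<in>I. - log 2 (f i))"
proof -
  have "0 < prod f I" using assms by (intro prod_pos) auto
  moreover have "ln (prod f I) = (\<Sum>i\<in>I. ln (f i))"
    using assms by (intro ln_prod) (auto simp: less_imp_neq[symmetric])
  ultimately show ?thesis by (simp add: log_def ln_div sum_divide_distrib sum_negf)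
qed

lemma log_inverse_pmf_block_pmf:
  assumes "zs \<in> set_pmf (replicate_pmf n p)"
  shows "log 2 (1 / pmf (block_pmf n p) (map fst zs, map snd zs)) = (\<Sum>i<n. - log 2 (pmf p (zs!i)))"
proof -
  have "length zs = n" "\<And>i. i < n \<Longrightarrow> zs!i \<in> set_pmf p"
    using assms by (auto simp: set_replicate_pmf)
  then show ?thesis
    by (simp add: pmf_block_pmf) (subst log_inverse_prod; auto simp: pmf_positive_iff)
qed

lemma log_inverse_cond_block_prob:
  assumes "zs \<in> set_pmf (replicate_pmf n p)"
  shows "log 2 (1 / cond_block_prob n p (map fst zs) (map snd zs)) = (\<Sum>i<n. cond_info p (zs!i))"
proof -
  have "length zs = n" "\<And>i. i < n \<Longrightarrow> zs!i \<in> set_pmf p"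
    using assms by (auto simp: set_replicate_pmf)
  then show ?thesis
    unfolding cond_block_prob_def cond_info_def
    by (subst log_inverse_prod) (auto simp: pmf_positive_iff)
qed

lemma log_inverse_cond_block_prob_swap:
  assumes "zs \<in> set_pmf (replicate_pmf n p)"
  shows "log 2 (1 / cond_block_prob n (swap_pmf p) (map snd zs) (map fst zs)) =
    (\<Sum>i<n. cond_info (swap_pmf p) (snd (zs!i), fst (zs!i)))"
proof -
  have "length zs = n" "\<And>i. i < n \<Longrightarrow> zs!i \<in> set_pmf p"
    using assms by (auto simp: set_replicate_pmf)
  then show ?thesis
    unfolding cond_block_prob_def cond_info_def
    by (subst log_inverse_prod) (auto simp: pmf_positive_iff pmf_swap_pmf map_snd_swap_pmf)
qed

lemma typical_if_empirical_means_close: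
  assumes "zs \<in> set_pmf (replicate_pmf n p)"
    and "\<bar>(1 / real n) * (\<Sum>i<n. cond_info p (zs!i)) - cond_entropy_pmf p\<bar> \<le> \<gamma>"
    and "\<bar>(1 / real n) * (\<Sum>i<n. cond_info (swap_pmf p) (snd (zs!i), fst (zs!i)))
          - cond_entropy_pmf (swap_pmf p)\<bar> \<le> \<gamma>"
    and "\<bar>(1 / real n) * (\<Sum>i<n. - log 2 (pmf p (zs!i))) - entropy_pmf p\<bar> \<le> \<gamma>"
  shows "(map fst zs, map snd zs) \<in> typ_set p n \<gamma>"
  using assms
  by (simp add: typ_set_def set_replicate_pmf log_inverse_pmf_block_pmf log_inverse_cond_block_prob
      log_inverse_cond_block_prob_swap)

lemma nu_le_second_moments:
  fixes pX :: "('a::finite \<times> 'b::finite) pmf"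
  assumes "0 < \<gamma>"
  obtains V where "\<And>n. 0 < n \<Longrightarrow> nu pX n \<gamma> \<le> V / (real n * \<gamma>\<^sup>2)"
proof -
  define g1 where "g1 = cond_info pX"
  define g2 where "g2 z = cond_info (swap_pmf pX) (snd z, fst z)" for z
  define g3 where "g3 z = - log 2 (pmf pX z)" for z
  define V where "V g = expect_pmf pX (\<lambda>z. (g z - expect_pmf pX g)\<^sup>2)" for g
  have fin: "finite (set_pmf pX)" by simp
  have means: "expect_pmf pX g1 = cond_entropy_pmf pX" "expect_pmf pX g2 = cond_entropy_pmf (swap_pmf pX)"
    "expect_pmf pX g3 = entropy_pmf pX"
    unfolding g1_def g2_def g3_def expect_pmf_cond_info
    by (simp_all only: fin entropy_pmf_eq_expect flip: expect_pmf_cond_info expect_pmf_swap_pmf)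
  show ?thesis
  proof
    fix n :: nat assume "0 < n"
    let ?R = "replicate_pmf n pX"
    define B where "B g = {zs. \<gamma> < \<bar>(1 / real n) * (\<Sum>i<n. g (zs!i)) - expect_pmf pX g\<bar>}" for g
    have "(\<lambda>zs. (map fst zs, map snd zs)) -` (- typ_set pX n \<gamma>) \<inter> set_pmf ?R \<subseteq> B g1 \<union> B g2 \<union> B g3"
      using typical_if_empirical_means_close[of _ n pX \<gamma>]
      unfolding B_def means unfolding g1_def g2_def g3_def by (force simp: not_less)
    then have "nu pX n \<gamma> \<le> measure_pmf.prob ?R (B g1 \<union> B g2 \<union> B g3)"
      unfolding nu_def block_pmf_def measure_map_pmf
      by (subst measure_Int_set_pmf[symmetric]) (rule measure_pmf.finite_measure_mono, auto)
    also have "\<dots> \<le> measure_pmf.prob ?R (B g1) + measure_pmf.prob ?R (B g2) + measure_pmf.prob ?R (B g3)"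
      using measure_Un_le[of "B g1 \<union> B g2" ?R "B g3"] measure_Un_le[of "B g1" ?R "B g2"] by simp
    also have "\<dots> \<le> V g1 / (real n * \<gamma>\<^sup>2) + V g2 / (real n * \<gamma>\<^sup>2) + V g3 / (real n * \<gamma>\<^sup>2)"
      unfolding B_def V_def using assms \<open>0 < n\<close> by (intro add_mono replicate_pmf_weak_law) simp_all
    finally show "nu pX n \<gamma> \<le> (V g1 + V g2 + V g3) / (real n * \<gamma>\<^sup>2)"
      by (simp add: add_divide_distrib)
  qed
qed

lemma nu_tendsto_zero:
  fixes pX :: "('a::finite \<times> 'b::finite) pmf"
  assumes "0 < \<gamma>"
  shows "(\<lambda>n. nu pX n \<gamma>) \<longlonglongrightarrow> 0"
proof -
  obtain V where V: "\<And>n. 0 < n \<Longrightarrow> nu pX n \<gamma> \<le> V / (real n * \<gamma>\<^sup>2)"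
    using nu_le_second_moments[OF assms] by blast
  show ?thesis
  proof (rule tendsto_sandwich[where h="\<lambda>n. (V / \<gamma>\<^sup>2) / real n"])
    show "\<forall>\<^sub>F n in sequentially. 0 \<le> nu pX n \<gamma>"
      by (simp add: nu_def)
    show "\<forall>\<^sub>F n in sequentially. nu pX n \<gamma> \<le> (V / \<gamma>\<^sup>2) / real n"
      using eventually_gt_at_top[of 0] by eventually_elim (use V in \<open>simp add: field_simps\<close>)
    show "(\<lambda>n. (V / \<gamma>\<^sup>2) / real n) \<longlonglongrightarrow> 0" by (rule lim_const_over_n)
  qed simp
qed

section \<open>A one-shot converse\<close>

definition cipher_joint_pmf :: "'x pmf \<Rightarrow> 'k pmf \<Rightarrow> ('k \<Rightarrow> 'x \<Rightarrow> 'c) \<Rightarrow> ('c \<times> 'x) pmf" where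
  "cipher_joint_pmf px pk enc = bind_pmf px (\<lambda>x. bind_pmf pk (\<lambda>k. return_pmf (enc k x, x)))"

lemma set_cipher_joint_pmf:
  "set_pmf (cipher_joint_pmf px pk enc) = (\<Union>x\<in>set_pmf px. \<Union>k\<in>set_pmf pk. {(enc k x, x)})"
  by (simp add: cipher_joint_pmf_def set_bind_pmf)

lemma map_snd_cipher_joint_pmf: "map_pmf snd (cipher_joint_pmf px pk enc) = px"
  by (simp add: cipher_joint_pmf_def map_bind_pmf map_pmf_comp map_pmf_const bind_return_pmf'
      flip: map_pmf_def)

lemma pmf_cipher_joint_pmf:
  assumes "finite (set_pmf px)"
  shows "pmf (cipher_joint_pmf px pk enc) (c, x) = pmf px x * pmf (map_pmf (\<lambda>k. enc k x) pk) c"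
proof -
  have "pmf (bind_pmf pk (\<lambda>k. return_pmf (enc k x', x'))) (c, x) =
      (if x' = x then pmf (map_pmf (\<lambda>k. enc k x) pk) c else 0)" for x'
    by (auto simp: pmf_map vimage_def simp flip: map_pmf_def)
  then have "pmf (cipher_joint_pmf px pk enc) (c, x) =
      (\<Sum>x'\<in>set_pmf px. pmf px x' * (if x' = x then pmf (map_pmf (\<lambda>k. enc k x) pk) c else 0))"
    unfolding cipher_joint_pmf_def using assms by (simp add: pmf_bind_finite)
  also have "\<dots> = pmf px x * pmf (map_pmf (\<lambda>k. enc k x) pk) c"
    using assms by (simp add: if_distrib[of "\<lambda>v. pmf px _ * v"] sum.delta set_pmf_eq cong: if_cong)
  finally show ?thesis .
qed

lemma mutual_info_cipher_joint_pmf: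
  assumes "finite (set_pmf px)" "finite (set_pmf pk)"
  shows "mutual_info_pmf (cipher_joint_pmf px pk enc) =
    expect_pmf px (\<lambda>x. expect_pmf pk (\<lambda>k. log 2 (pmf (map_pmf (\<lambda>k. enc k x) pk) (enc k x) /
                                        pmf (map_pmf fst (cipher_joint_pmf px pk enc)) (enc k x))))"
    (is "_ = ?rhs")
proof -
  let ?q = "cipher_joint_pmf px pk enc"
  let ?f = "\<lambda>z. log 2 (pmf ?q z / (pmf (map_pmf fst ?q) (fst z) * pmf (map_pmf snd ?q) (snd z)))"
  have "mutual_info_pmf ?q = expect_pmf px (\<lambda>x. expect_pmf pk (\<lambda>k. ?f (enc k x, x)))"
    unfolding mutual_info_pmf_def expect_pmf_def[of ?q, symmetric]
    unfolding cipher_joint_pmf_def using assms by (simp add: expect_pmf_bind set_bind_pmf)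
  also have "\<dots> = ?rhs"
    using assms
    by (intro expect_pmf_cong)
      (simp add: pmf_cipher_joint_pmf map_snd_cipher_joint_pmf set_pmf_eq)
  finally show ?thesis .
qed

text \<open>A block \<open>x \<in> E\<close> is recovered from the key part \<open>\<kappa> k\<close>, the side information \<open>\<pi> x\<close> and the
  ciphertext part \<open>\<sigma> (enc k x) = e (\<kappa> k) x\<close>. The joint bound uses the whole key and ciphertext
  with trivial side information; the conditional bound for \<open>X\<^sub>1\<close> uses \<open>K\<^sub>1\<close>, \<open>C\<^sub>1\<close> and side
  information \<open>X\<^sub>2\<close>.\<close>

locale one_shot_decoding =
  fixes px :: "'x pmf" and pk :: "'k pmf" and enc :: "'k \<Rightarrow> 'x \<Rightarrow> 'c"
    and \<kappa> :: "'k \<Rightarrow> 'j" and \<pi> :: "'x \<Rightarrow> 'y" and \<sigma> :: "'c \<Rightarrow> 'd" and e :: "'j \<Rightarrow> 'x \<Rightarrow> 'd"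
    and E :: "'x set"
  assumes finite_px: "finite (set_pmf px)" and finite_pk: "finite (set_pmf pk)"
    and E_subset: "E \<subseteq> set_pmf px" and prob_E_pos: "0 < measure_pmf.prob px E"
    and \<sigma>_enc: "\<And>x k. x \<in> set_pmf px \<Longrightarrow> k \<in> set_pmf pk \<Longrightarrow> \<sigma> (enc k x) = e (\<kappa> k) x"
    and decodable: "\<And>x x' k. x \<in> E \<Longrightarrow> x' \<in> E \<Longrightarrow> k \<in> set_pmf pk \<Longrightarrow> \<pi> x = \<pi> x' \<Longrightarrow>
      e (\<kappa> k) x = e (\<kappa> k) x' \<Longrightarrow> x = x'"
begin

abbreviation "P \<equiv> measure_pmf.prob px E"
abbreviation "W \<equiv> map_pmf fst (cipher_joint_pmf px pk enc)"
abbreviation "\<rho> \<equiv> map_pmf \<kappa> pk"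
abbreviation "\<mu> \<equiv> map_pmf \<pi> px"

abbreviation cond_cipher :: "'x \<Rightarrow> 'c pmf" where
  "cond_cipher x \<equiv> map_pmf (\<lambda>k. enc k x) pk"

abbreviation cipher_divergence :: "'x \<Rightarrow> real" where
  "cipher_divergence x \<equiv> expect_pmf pk (\<lambda>k. log 2 (pmf (cond_cipher x) (enc k x) / pmf W (enc k x)))"

lemma finite_E: "finite E"
  using E_subset finite_px finite_subset by blast

lemma prob_E_eq_sum: "P = (\<Sum>x\<in>E. pmf px x)"
  using finite_E by (simp add: measure_measure_pmf_finite)

lemma finite_set_W: "finite (set_pmf W)"
  using finite_px finite_pk by (simp add: set_cipher_joint_pmf)

lemma enc_in_set_W: "x \<in> set_pmf px \<Longrightarrow> k \<in> set_pmf pk \<Longrightarrow> enc k x \<in> set_pmf W"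
  by (force simp: set_cipher_joint_pmf)

lemma expect_pmf_div_cond_cipher:
  "expect_pmf pk (\<lambda>k. F (enc k x) / pmf (cond_cipher x) (enc k x)) = (\<Sum>c\<in>set_pmf (cond_cipher x). F c)"
proof -
  have "expect_pmf pk (\<lambda>k. F (enc k x) / pmf (cond_cipher x) (enc k x)) =
      expect_pmf (cond_cipher x) (\<lambda>c. F c / pmf (cond_cipher x) c)"
    using finite_pk by (simp add: expect_pmf_map)
  also have "\<dots> = (\<Sum>c\<in>set_pmf (cond_cipher x). F c)"
    unfolding expect_pmf_def by (intro sum.cong) (auto simp: set_pmf_eq)
  finally show ?thesis .
qed

lemma cipher_divergence_nonneg:
  assumes "x \<in> set_pmf px"
  shows "0 \<le> cipher_divergence x"
proof -
  have "cipher_divergence x = expect_pmf (cond_cipher x) (\<lambda>c. log 2 (pmf (cond_cipher x) c / pmf W c))"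
    using finite_pk by (simp add: expect_pmf_map)
  also have "0 \<le> \<dots>"
    unfolding expect_pmf_def
    using assms finite_set_W enc_in_set_W by (intro divergence_nonneg) auto
  finally show ?thesis .
qed

lemma sum_cipher_divergence_le_mutual_info:
  "(\<Sum>x\<in>E. pmf px x * cipher_divergence x) \<le> mutual_info_pmf (cipher_joint_pmf px pk enc)"
  unfolding mutual_info_cipher_joint_pmf[OF finite_px finite_pk] expect_pmf_def[of px]
  using finite_px E_subset cipher_divergence_nonneg by (intro sum_mono2) auto

text \<open>The reference measure against which Gibbs' inequality is applied on \<open>E \<times> set_pmf pk\<close>.\<close>

definition weight :: "'x \<Rightarrow> 'k \<Rightarrow> real" where
  "weight x k = P * pmf \<mu> (\<pi> x) * pmf \<rho> (\<kappa> k) * pmf pk k * pmf W (enc k x) / pmf (cond_cipher x) (enc k x)"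

lemma sum_key_weight_le:
  assumes "x \<in> E"
  shows "(\<Sum>k\<in>set_pmf pk. pmf pk k * pmf \<rho> (\<kappa> k) * pmf W (enc k x) / pmf (cond_cipher x) (enc k x))
    \<le> (\<Sum>c\<in>set_pmf W. pmf W c * pmf (map_pmf (\<lambda>j. e j x) \<rho>) (\<sigma> c))"
proof -
  let ?s = "map_pmf (\<lambda>j. e j x) \<rho>"
  have "x \<in> set_pmf px" using assms E_subset by auto
  have "(\<Sum>k\<in>set_pmf pk. pmf pk k * pmf \<rho> (\<kappa> k) * pmf W (enc k x) / pmf (cond_cipher x) (enc k x))
      \<le> expect_pmf pk (\<lambda>k. pmf W (enc k x) * pmf ?s (\<sigma> (enc k x)) / pmf (cond_cipher x) (enc k x))"
    unfolding expect_pmf_def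
  proof (intro sum_mono)
    fix k assume "k \<in> set_pmf pk"
    then have "pmf \<rho> (\<kappa> k) \<le> pmf ?s (\<sigma> (enc k x))"
      using \<sigma>_enc[OF \<open>x \<in> set_pmf px\<close>] pmf_le_pmf_map[of \<rho> "\<kappa> k" "\<lambda>j. e j x"] by simp
    then have "pmf pk k * pmf W (enc k x) * pmf \<rho> (\<kappa> k) / pmf (cond_cipher x) (enc k x)
        \<le> pmf pk k * pmf W (enc k x) * pmf ?s (\<sigma> (enc k x)) / pmf (cond_cipher x) (enc k x)"
      by (intro divide_right_mono mult_left_mono) simp_all
    then show "pmf pk k * pmf \<rho> (\<kappa> k) * pmf W (enc k x) / pmf (cond_cipher x) (enc k x)
        \<le> pmf pk k * (pmf W (enc k x) * pmf ?s (\<sigma> (enc k x)) / pmf (cond_cipher x) (enc k x))"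
      by (simp add: ac_simps)
  qed
  also have "\<dots> = (\<Sum>c\<in>set_pmf (cond_cipher x). pmf W c * pmf ?s (\<sigma> c))"
    by (rule expect_pmf_div_cond_cipher)
  also have "\<dots> \<le> (\<Sum>c\<in>set_pmf W. pmf W c * pmf ?s (\<sigma> c))"
    using \<open>x \<in> set_pmf px\<close> finite_set_W enc_in_set_W by (intro sum_mono2) auto
  finally show ?thesis .
qed

lemma sum_weight_le: "(\<Sum>(x, k)\<in>E \<times> set_pmf pk. weight x k) \<le> P"
proof -
  let ?s = "\<lambda>x. map_pmf (\<lambda>j. e j x) \<rho>"
  have packing: "(\<Sum>x\<in>E. pmf \<mu> (\<pi> x) * pmf (?s x) d) \<le> 1" for d
  proof -
    have "pmf (?s x) d = measure_pmf.prob \<rho> {j. e j x = d}" for x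
      by (simp add: pmf_map vimage_def)
    moreover have "(\<Sum>x\<in>E. pmf \<mu> (\<pi> x) * measure_pmf.prob \<rho> {j. e j x = d}) \<le> 1"
      using finite_px E_subset decodable
      by (intro packing_sum_le_one) (auto intro: finite_subset)
    ultimately show ?thesis by (simp only:)
  qed
  have "(\<Sum>(x, k)\<in>E \<times> set_pmf pk. weight x k) = (\<Sum>x\<in>E. P * pmf \<mu> (\<pi> x) *
      (\<Sum>k\<in>set_pmf pk. pmf pk k * pmf \<rho> (\<kappa> k) * pmf W (enc k x) / pmf (cond_cipher x) (enc k x)))"
    by (simp add: weight_def sum.cartesian_product[symmetric] sum_distrib_left algebra_simps)
  also have "\<dots> \<le> (\<Sum>x\<in>E. P * pmf \<mu> (\<pi> x) * (\<Sum>c\<in>set_pmf W. pmf W c * pmf (?s x) (\<sigma> c)))"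
    using sum_key_weight_le by (intro sum_mono mult_left_mono) auto
  also have "\<dots> = P * (\<Sum>c\<in>set_pmf W. pmf W c * (\<Sum>x\<in>E. pmf \<mu> (\<pi> x) * pmf (?s x) (\<sigma> c)))"
    by (simp add: sum_distrib_left algebra_simps sum.swap[of _ E])
  also have "\<dots> \<le> P * (\<Sum>c\<in>set_pmf W. pmf W c)"
    using packing by (intro mult_left_mono sum_mono) (auto intro: mult_left_le)
  also have "\<dots> = P" using finite_set_W by (simp add: sum_pmf_eq_1)
  finally show ?thesis .
qed

lemma log_ratio_weight:
  assumes "x \<in> set_pmf px" "k \<in> set_pmf pk"
  shows "log 2 (pmf px x * pmf pk k / weight x k) =
    log 2 (pmf (cond_cipher x) (enc k x) / pmf W (enc k x)) + log 2 (pmf px x / (P * pmf \<mu> (\<pi> x)))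
    + - log 2 (pmf \<rho> (\<kappa> k))"
proof -
  have pos: "0 < pmf pk k" "0 < pmf W (enc k x)" "0 < P" "0 < pmf \<rho> (\<kappa> k)" "0 < pmf \<mu> (\<pi> x)"
    "0 < pmf (cond_cipher x) (enc k x)" "0 < pmf px x"
    using assms prob_E_pos enc_in_set_W by (simp_all add: pmf_positive)
  then have "pmf px x * pmf pk k / weight x k =
      pmf (cond_cipher x) (enc k x) / pmf W (enc k x) * (pmf px x / (P * pmf \<mu> (\<pi> x))) / pmf \<rho> (\<kappa> k)"
    by (simp add: weight_def field_simps)
  then show ?thesis
    using pos by (simp add: log_divide log_mult)
qed

lemma gibbs_sum_weight_nonneg:
  "0 \<le> (\<Sum>(x, k)\<in>E \<times> set_pmf pk. pmf px x * pmf pk k * log 2 (pmf px x * pmf pk k / weight x k))"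
proof -
  let ?a = "\<lambda>(x, k). pmf px x * pmf pk k" and ?w = "\<lambda>(x, k). weight x k"
  have "0 \<le> (\<Sum>t\<in>E \<times> set_pmf pk. ?a t * log 2 (?a t / ?w t))"
  proof (rule gibbs_inequality)
    have "sum ?a (E \<times> set_pmf pk) = P"
      using finite_pk
      by (simp add: sum.cartesian_product[symmetric] prob_E_eq_sum sum_pmf_eq_1 flip: sum_distrib_left)
    then show "sum ?w (E \<times> set_pmf pk) \<le> sum ?a (E \<times> set_pmf pk)"
      using sum_weight_le by simp
  qed (use finite_E finite_pk E_subset prob_E_pos enc_in_set_W in
      \<open>auto simp: weight_def pmf_positive intro!: divide_pos_pos mult_pos_pos\<close>)
  also have "\<dots> = (\<Sum>(x, k)\<in>E \<times> set_pmf pk. pmf px x * pmf pk k * log 2 (pmf px x * pmf pk k / weight x k))"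
    by (intro sum.cong) auto
  finally show ?thesis .
qed

lemma sum_key_log_ratio_weight:
  assumes "x \<in> set_pmf px"
  shows "(\<Sum>k\<in>set_pmf pk. pmf px x * pmf pk k * log 2 (pmf px x * pmf pk k / weight x k)) =
    pmf px x * (cipher_divergence x + log 2 (pmf px x / (P * pmf \<mu> (\<pi> x))) + entropy_pmf \<rho>)"
proof -
  have entropy_\<rho>: "entropy_pmf \<rho> = expect_pmf pk (\<lambda>k. - log 2 (pmf \<rho> (\<kappa> k)))"
    using finite_pk by (simp add: entropy_pmf_eq_expect expect_pmf_map)
  have "(\<Sum>k\<in>set_pmf pk. pmf px x * pmf pk k * log 2 (pmf px x * pmf pk k / weight x k)) =
      pmf px x * expect_pmf pk (\<lambda>k. log 2 (pmf px x * pmf pk k / weight x k))"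
    by (simp add: expect_pmf_def sum_distrib_left mult.assoc)
  also have "\<dots> = pmf px x * expect_pmf pk (\<lambda>k. log 2 (pmf (cond_cipher x) (enc k x) / pmf W (enc k x))
      + log 2 (pmf px x / (P * pmf \<mu> (\<pi> x))) + - log 2 (pmf \<rho> (\<kappa> k)))"
    using log_ratio_weight[OF assms] by (simp cong: expect_pmf_cong)
  also have "\<dots> = pmf px x * (cipher_divergence x + log 2 (pmf px x / (P * pmf \<mu> (\<pi> x))) + entropy_pmf \<rho>)"
    using finite_pk by (simp only: expect_pmf_add expect_pmf_const entropy_\<rho>)
  finally show ?thesis .
qed

theorem one_shot_bound:
  "(\<Sum>x\<in>E. pmf px x * log 2 (P * pmf \<mu> (\<pi> x) / pmf px x))
    \<le> P * entropy_pmf \<rho> + mutual_info_pmf (cipher_joint_pmf px pk enc)"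
proof -
  let ?L = "\<lambda>x. log 2 (pmf px x / (P * pmf \<mu> (\<pi> x)))"
  have "?L x = - log 2 (P * pmf \<mu> (\<pi> x) / pmf px x)" if "x \<in> E" for x
    using that E_subset prob_E_pos by (subst log_inverse[symmetric]) (auto simp: pmf_positive)
  then have L: "(\<Sum>x\<in>E. pmf px x * ?L x) = - (\<Sum>x\<in>E. pmf px x * log 2 (P * pmf \<mu> (\<pi> x) / pmf px x))"
    by (simp add: sum_negf)
  have "(\<Sum>x\<in>E. pmf px x * entropy_pmf \<rho>) = P * entropy_pmf \<rho>"
    by (simp add: prob_E_eq_sum sum_distrib_right)
  then have "(\<Sum>(x, k)\<in>E \<times> set_pmf pk. pmf px x * pmf pk k * log 2 (pmf px x * pmf pk k / weight x k)) =
      (\<Sum>x\<in>E. pmf px x * cipher_divergence x) + (\<Sum>x\<in>E. pmf px x * ?L x) + P * entropy_pmf \<rho>"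
    using E_subset
    by (simp add: sum.cartesian_product[symmetric] sum_key_log_ratio_weight subset_iff
        distrib_left sum.distrib cong: sum.cong)
  then show ?thesis
    using gibbs_sum_weight_nonneg sum_cipher_divergence_le_mutual_info L by linarith
qed

lemma entropy_le_of_one_shot_bound:
  assumes "0 < n" "0 < t" "t \<le> P" "mutual_info_pmf (cipher_joint_pmf px pk enc) \<le> \<delta>"
    and "entropy_pmf \<rho> = real n * H\<^sub>K"
    and typical: "\<And>x. x \<in> E \<Longrightarrow> real n * (H - \<gamma>) \<le> log 2 (pmf \<mu> (\<pi> x) / pmf px x)"
  shows "H \<le> H\<^sub>K + \<gamma> + (1 / real n) * (\<delta> / t + log 2 (1 / t))"
proof -
  have "0 \<le> (\<Sum>x\<in>E. pmf px x * cipher_divergence x)"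
    using E_subset cipher_divergence_nonneg by (intro sum_nonneg mult_nonneg_nonneg) auto
  then have "0 \<le> \<delta>" using assms(4) sum_cipher_divergence_le_mutual_info by linarith
  have split: "log 2 (P * pmf \<mu> (\<pi> x) / pmf px x) = log 2 P + log 2 (pmf \<mu> (\<pi> x) / pmf px x)"
    if "x \<in> E" for x
  proof -
    have "0 < pmf \<mu> (\<pi> x) / pmf px x" using that E_subset by (auto simp: pmf_positive)
    then have "log 2 (P * (pmf \<mu> (\<pi> x) / pmf px x)) = log 2 P + log 2 (pmf \<mu> (\<pi> x) / pmf px x)"
      using prob_E_pos by (intro log_mult_pos)
    then show ?thesis by simp
  qed
  have "P * log 2 P + P * (real n * (H - \<gamma>)) =
      (\<Sum>x\<in>E. pmf px x * log 2 P) + (\<Sum>x\<in>E. pmf px x * (real n * (H - \<gamma>)))"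
    by (simp only: prob_E_eq_sum sum_distrib_right)
  also have "\<dots> \<le> (\<Sum>x\<in>E. pmf px x * log 2 P) + (\<Sum>x\<in>E. pmf px x * log 2 (pmf \<mu> (\<pi> x) / pmf px x))"
    using typical by (intro add_left_mono sum_mono mult_left_mono) auto
  also have "\<dots> = (\<Sum>x\<in>E. pmf px x * log 2 (P * pmf \<mu> (\<pi> x) / pmf px x))"
    by (simp add: split distrib_left sum.distrib)
  also have "\<dots> \<le> P * (real n * H\<^sub>K) + \<delta>"
    using one_shot_bound assms(4,5) by simp
  finally have "real n * (H - \<gamma>) \<le> real n * H\<^sub>K + \<delta> / P - log 2 P"
    using prob_E_pos by (simp add: field_simps)
  moreover have "\<delta> / P \<le> \<delta> / t" using assms(2,3) \<open>0 \<le> \<delta>\<close> by (intro divide_left_mono) auto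
  moreover have "- log 2 P \<le> log 2 (1 / t)" using assms(2,3) by (simp add: log_divide)
  ultimately have "real n * (H - \<gamma>) \<le> real n * H\<^sub>K + (\<delta> / t + log 2 (1 / t))"
    by linarith
  then have "H - \<gamma> \<le> H\<^sub>K + (\<delta> / t + log 2 (1 / t)) / real n"
    using assms(1) by (simp add: field_simps)
  then show ?thesis by simp
qed

end

section \<open>Distributed encryption systems\<close>

lemma typical_lower_bound:
  assumes "0 < n" "\<bar>(1 / real n) * L - H\<bar> \<le> \<gamma>"
  shows "real n * (H - \<gamma>) \<le> L"
proof -
  have "H - \<gamma> \<le> (1 / real n) * L" using assms(2) by linarith
  then show ?thesis using assms(1) by (simp add: field_simps)
qed

lemma decoded_eq_if_ciphertexts_eq:
  assumes "is_system n C1 C2 Enc1 Enc2 Dec M1 M2 ph1 ph2 ps"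
    and "length x1 = n" "length x2 = n" "length y1 = n" "length y2 = n" "length k1 = n" "length k2 = n"
    and "ps (ph1 x1) (ph2 x2) = (x1, x2)" "ps (ph1 y1) (ph2 y2) = (y1, y2)"
    and "Enc1 k1 x1 = Enc1 k1 y1" "Enc2 k2 x2 = Enc2 k2 y2"
  shows "(x1, x2) = (y1, y2)"
proof -
  have dec: "Dec k1 k2 (Enc1 k1 u1) (Enc2 k2 u2) = ps (ph1 u1) (ph2 u2)"
    if "length u1 = n" "length u2 = n" for u1 u2
    using assms(1,6,7) that unfolding is_system_def by blast
  have "(x1, x2) = Dec k1 k2 (Enc1 k1 x1) (Enc2 k2 x2)" using assms(2,3,8) dec by simp
  also have "\<dots> = Dec k1 k2 (Enc1 k1 y1) (Enc2 k2 y2)" using assms(10,11) by simp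
  also have "\<dots> = (y1, y2)" using assms(4,5,9) dec by simp
  finally show ?thesis .
qed

locale block_system =
  fixes n :: nat and pX pK :: "('a::finite \<times> 'b::finite) pmf"
    and C1 C2 M1 M2 :: "nat set"
    and Enc1 :: "'a list \<Rightarrow> 'a list \<Rightarrow> nat" and Enc2 :: "'b list \<Rightarrow> 'b list \<Rightarrow> nat"
    and Dec :: "'a list \<Rightarrow> 'b list \<Rightarrow> nat \<Rightarrow> nat \<Rightarrow> 'a list \<times> 'b list"
    and ph1 :: "'a list \<Rightarrow> nat" and ph2 :: "'b list \<Rightarrow> nat"
    and ps :: "nat \<Rightarrow> nat \<Rightarrow> 'a list \<times> 'b list"
    and \<gamma> \<epsilon> \<delta> :: real
  assumes system: "is_system n C1 C2 Enc1 Enc2 Dec M1 M2 ph1 ph2 ps"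
    and n_pos: "0 < n"
    and error: "error_prob n pX ph1 ph2 ps \<le> \<epsilon>"
    and secrecy: "mutual_info_pmf (cipher_source_pmf n pX pK Enc1 Enc2) \<le> \<delta>"
    and nu_eps_lt_1: "nu_eps pX n \<gamma> \<epsilon> < 1"
begin

abbreviation "px \<equiv> block_pmf n pX"
abbreviation "pk \<equiv> block_pmf n pK"

abbreviation enc :: "'a list \<times> 'b list \<Rightarrow> 'a list \<times> 'b list \<Rightarrow> nat \<times> nat" where
  "enc k x \<equiv> (Enc1 (fst k) (fst x), Enc2 (snd k) (snd x))"

definition E :: "('a list \<times> 'b list) set" where
  "E = set_pmf px \<inter> typ_set pX n \<gamma> \<inter> {x. ps (ph1 (fst x)) (ph2 (snd x)) = x}"

lemma mutual_info_le: "mutual_info_pmf (cipher_joint_pmf px pk enc) \<le> \<delta>"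
  using secrecy by (simp add: cipher_source_pmf_def cipher_joint_pmf_def case_prod_unfold)

lemma prob_E_ge: "1 - nu_eps pX n \<gamma> \<epsilon> \<le> measure_pmf.prob px E"
proof -
  let ?D = "{x. ps (ph1 (fst x)) (ph2 (snd x)) = x}"
  have compl: "measure_pmf.prob px (- A) = 1 - measure_pmf.prob px A" for A
    using measure_pmf.prob_compl[of A px] by (simp add: Compl_eq_Diff_UNIV)
  have "E = (typ_set pX n \<gamma> \<inter> ?D) \<inter> set_pmf px" by (auto simp: E_def)
  then have "measure_pmf.prob px E = measure_pmf.prob px (typ_set pX n \<gamma> \<inter> ?D)"
    by (simp only: measure_Int_set_pmf)
  also have "\<dots> = 1 - measure_pmf.prob px (- typ_set pX n \<gamma> \<union> - ?D)"
    using compl[of "typ_set pX n \<gamma> \<inter> ?D"] by simp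
  finally have "measure_pmf.prob px E = 1 - measure_pmf.prob px (- typ_set pX n \<gamma> \<union> - ?D)" .
  moreover have "measure_pmf.prob px (- typ_set pX n \<gamma> \<union> - ?D) \<le>
      measure_pmf.prob px (- typ_set pX n \<gamma>) + measure_pmf.prob px (- ?D)"
    by (rule measure_Un_le) simp_all
  moreover have "- ?D = {(x1, x2). ps (ph1 x1) (ph2 x2) \<noteq> (x1, x2)}" by auto
  ultimately show ?thesis
    using error by (simp add: nu_eps_def nu_def error_prob_def)
qed

lemma lengths_of_E: "x \<in> E \<Longrightarrow> length (fst x) = n \<and> length (snd x) = n"
  unfolding E_def using length_set_block_pmf[of "fst x" "snd x"] by auto

lemma typical_of_E:
  assumes "(x1, x2) \<in> E"
  shows "\<bar>(1 / real n) * log 2 (1 / cond_block_prob n pX x1 x2) - cond_entropy_pmf pX\<bar> \<le> \<gamma>"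
    and "\<bar>(1 / real n) * log 2 (1 / cond_block_prob n (swap_pmf pX) x2 x1)
          - cond_entropy_pmf (swap_pmf pX)\<bar> \<le> \<gamma>"
    and "\<bar>(1 / real n) * log 2 (1 / pmf px (x1, x2)) - entropy_pmf pX\<bar> \<le> \<gamma>"
  using assms by (simp_all add: E_def typ_set_def)

lemma E_decodable:
  assumes "x \<in> E" "x' \<in> E" "k \<in> set_pmf pk"
    and "Enc1 (fst k) (fst x) = Enc1 (fst k) (fst x')" "Enc2 (snd k) (snd x) = Enc2 (snd k) (snd x')"
  shows "x = x'"
proof -
  have "length (fst k) = n" "length (snd k) = n"
    using assms(3) length_set_block_pmf[of "fst k" "snd k"] by auto
  then show ?thesis
    using assms lengths_of_E[OF assms(1)] lengths_of_E[OF assms(2)]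
      decoded_eq_if_ciphertexts_eq[OF system, of "fst x" "snd x" "fst x'" "snd x'" "fst k" "snd k"]
    by (auto simp: E_def)
qed

lemma entropy_le_of_decodable:
  assumes "\<And>x k. x \<in> set_pmf px \<Longrightarrow> k \<in> set_pmf pk \<Longrightarrow> \<sigma> (enc k x) = e (\<kappa> k) x"
    and "\<And>x x' k. x \<in> E \<Longrightarrow> x' \<in> E \<Longrightarrow> k \<in> set_pmf pk \<Longrightarrow> \<pi> x = \<pi> x' \<Longrightarrow>
      e (\<kappa> k) x = e (\<kappa> k) x' \<Longrightarrow> x = x'"
    and "entropy_pmf (map_pmf \<kappa> pk) = real n * H\<^sub>K"
    and "\<And>x. x \<in> E \<Longrightarrow> real n * (H - \<gamma>) \<le> log 2 (pmf (map_pmf \<pi> px) (\<pi> x) / pmf px x)"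
  shows "H \<le> H\<^sub>K + \<gamma> + zeta pX n \<gamma> \<epsilon> \<delta>"
proof -
  have "0 < 1 - nu_eps pX n \<gamma> \<epsilon>" using nu_eps_lt_1 by simp
  interpret one_shot_decoding px pk enc \<kappa> \<pi> \<sigma> e E
  proof
    show "finite (set_pmf px)" "finite (set_pmf pk)" by (simp_all add: finite_set_block_pmf)
    show "E \<subseteq> set_pmf px" by (auto simp: E_def)
    show "0 < measure_pmf.prob px E" using prob_E_ge \<open>0 < 1 - nu_eps pX n \<gamma> \<epsilon>\<close> by linarith
  qed (fact assms(1), fact assms(2))
  show ?thesis
    unfolding zeta_def
    using entropy_le_of_one_shot_bound[OF n_pos \<open>0 < 1 - nu_eps pX n \<gamma> \<epsilon>\<close> prob_E_ge mutual_info_le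
        assms(3,4)] .
qed

lemma joint_entropy_bound: "entropy_pmf pX \<le> entropy_pmf pK + \<gamma> + zeta pX n \<gamma> \<epsilon> \<delta>"
proof (rule entropy_le_of_decodable[where \<kappa>=id and \<pi>="\<lambda>_. ()" and \<sigma>=id and e=enc])
  show "entropy_pmf (map_pmf id pk) = real n * entropy_pmf pK"
    by (simp add: entropy_block_pmf)
  fix x assume "x \<in> E"
  then show "real n * (entropy_pmf pX - \<gamma>) \<le> log 2 (pmf (map_pmf (\<lambda>_. ()) px) () / pmf px x)"
    using typical_lower_bound[OF n_pos] typical_of_E(3)[of "fst x" "snd x"] by simp
qed (use E_decodable in auto)

lemma cond_entropy_fst_bound:
  "cond_entropy_pmf pX \<le> entropy_pmf (map_pmf fst pK) + \<gamma> + zeta pX n \<gamma> \<epsilon> \<delta>"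
proof (rule entropy_le_of_decodable[where \<kappa>=fst and \<pi>=snd and \<sigma>=fst and e="\<lambda>k1 x. Enc1 k1 (fst x)"])
  show "entropy_pmf (map_pmf fst pk) = real n * entropy_pmf (map_pmf fst pK)"
    by (simp add: map_fst_block_pmf entropy_replicate_pmf)
  fix x assume "x \<in> E"
  obtain x1 x2 where x: "x = (x1, x2)" by force
  have "pmf (map_pmf snd px) x2 / pmf px x = 1 / cond_block_prob n pX x1 x2"
    using lengths_of_E[OF \<open>x \<in> E\<close>]
    by (simp add: x map_snd_block_pmf cond_block_prob_def prod_dividef pmf_replicate_pmf pmf_block_pmf)
  then show "real n * (cond_entropy_pmf pX - \<gamma>) \<le> log 2 (pmf (map_pmf snd px) (snd x) / pmf px x)"
    using typical_lower_bound[OF n_pos] typical_of_E(1) \<open>x \<in> E\<close> by (simp add: x)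
qed (use E_decodable in auto)

lemma cond_entropy_snd_bound:
  "cond_entropy_pmf (swap_pmf pX) \<le> entropy_pmf (map_pmf snd pK) + \<gamma> + zeta pX n \<gamma> \<epsilon> \<delta>"
proof (rule entropy_le_of_decodable[where \<kappa>=snd and \<pi>=fst and \<sigma>=snd and e="\<lambda>k2 x. Enc2 k2 (snd x)"])
  show "entropy_pmf (map_pmf snd pk) = real n * entropy_pmf (map_pmf snd pK)"
    by (simp add: map_snd_block_pmf entropy_replicate_pmf)
  fix x assume "x \<in> E"
  obtain x1 x2 where x: "x = (x1, x2)" by force
  have "pmf (map_pmf fst px) x1 / pmf px x = 1 / cond_block_prob n (swap_pmf pX) x2 x1"
    using lengths_of_E[OF \<open>x \<in> E\<close>]
    by (simp add: x map_fst_block_pmf cond_block_prob_def prod_dividef pmf_replicate_pmf pmf_block_pmf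
        pmf_swap_pmf map_snd_swap_pmf)
  then show "real n * (cond_entropy_pmf (swap_pmf pX) - \<gamma>) \<le> log 2 (pmf (map_pmf fst px) (fst x) / pmf px x)"
    using typical_lower_bound[OF n_pos] typical_of_E(2) \<open>x \<in> E\<close> by (simp add: x)
qed (use E_decodable in auto)

end

lemma obtain_reliable_secure_systems:
  assumes "rate_region \<epsilon> \<delta> pX pK \<noteq> {}"
  obtains C1 C2 Enc1 Enc2 Dec M1 M2 ph1 ph2 ps where
    "\<And>n. 1 \<le> n \<Longrightarrow>
      is_system n (C1 n) (C2 n) (Enc1 n) (Enc2 n) (Dec n) (M1 n) (M2 n) (ph1 n) (ph2 n) (ps n)"
    and "\<forall>\<^sub>F n in sequentially. error_prob n pX (ph1 n) (ph2 n) (ps n) \<le> \<epsilon> \<and>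
      mutual_info_pmf (cipher_source_pmf n pX pK (Enc1 n) (Enc2 n)) \<le> \<delta>"
proof -
  from assms obtain R1 R2 where "(R1, R2) \<in> rate_region \<epsilon> \<delta> pX pK" by auto
  then obtain C1 C2 Enc1 Enc2 Dec M1 M2 ph1 ph2 ps where
    system: "\<forall>n\<ge>1. is_system n (C1 n) (C2 n) (Enc1 n) (Enc2 n) (Dec n) (M1 n) (M2 n) (ph1 n) (ph2 n) (ps n)"
    and rates: "\<forall>\<gamma>>0. \<exists>n0. \<forall>n\<ge>n0.
          (1 / real n) * log 2 (real (card (C1 n))) \<le> R1 + \<gamma> \<and>
          (1 / real n) * log 2 (real (card (C2 n))) \<le> R2 + \<gamma> \<and>
          error_prob n pX (ph1 n) (ph2 n) (ps n) \<le> \<epsilon> \<and>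
          mutual_info_pmf (cipher_source_pmf n pX pK (Enc1 n) (Enc2 n)) \<le> \<delta>"
    unfolding rate_region_def by blast
  obtain n0 where "\<forall>n\<ge>n0. error_prob n pX (ph1 n) (ph2 n) (ps n) \<le> \<epsilon> \<and>
      mutual_info_pmf (cipher_source_pmf n pX pK (Enc1 n) (Enc2 n)) \<le> \<delta>"
    using rates by (meson zero_less_one)
  then show thesis
    using system by (intro that[of C1 C2 Enc1 Enc2 Dec M1 M2 ph1 ph2 ps]) (auto simp: eventually_sequentially)
qed

theorem proposition1:
  fixes pX pK :: "('a :: {finite, field} \<times> 'b :: {finite, field}) pmf"
    and \<delta>0 \<epsilon> \<delta> :: real
  assumes "\<delta>0 > 0"
    and "0 < \<epsilon>" and "\<epsilon> < 1"
    and "0 < \<delta>" and "\<delta> \<le> \<delta>0"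
    and "rate_region \<epsilon> \<delta> pX pK \<noteq> {}"
  shows "\<forall>\<gamma>>0. \<exists>n0. \<forall>n\<ge>n0.
           cond_entropy_pmf pX \<le> entropy_pmf (map_pmf fst pK) + \<gamma> + zeta pX n \<gamma> \<epsilon> \<delta> \<and>
           cond_entropy_pmf (swap_pmf pX) \<le> entropy_pmf (map_pmf snd pK) + \<gamma> + zeta pX n \<gamma> \<epsilon> \<delta> \<and>
           entropy_pmf pX \<le> entropy_pmf pK + \<gamma> + zeta pX n \<gamma> \<epsilon> \<delta>"
proof -
  obtain C1 C2 Enc1 Enc2 Dec M1 M2 ph1 ph2 ps where
    system: "\<And>n. 1 \<le> n \<Longrightarrow>
      is_system n (C1 n) (C2 n) (Enc1 n) (Enc2 n) (Dec n) (M1 n) (M2 n) (ph1 n) (ph2 n) (ps n)"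
    and reliable_secure: "\<forall>\<^sub>F n in sequentially. error_prob n pX (ph1 n) (ph2 n) (ps n) \<le> \<epsilon> \<and>
      mutual_info_pmf (cipher_source_pmf n pX pK (Enc1 n) (Enc2 n)) \<le> \<delta>"
    using obtain_reliable_secure_systems[OF assms(6)] by blast
  have "\<forall>\<^sub>F n in sequentially.
      cond_entropy_pmf pX \<le> entropy_pmf (map_pmf fst pK) + \<gamma> + zeta pX n \<gamma> \<epsilon> \<delta> \<and>
      cond_entropy_pmf (swap_pmf pX) \<le> entropy_pmf (map_pmf snd pK) + \<gamma> + zeta pX n \<gamma> \<epsilon> \<delta> \<and>
      entropy_pmf pX \<le> entropy_pmf pK + \<gamma> + zeta pX n \<gamma> \<epsilon> \<delta>" if "0 < \<gamma>" for \<gamma>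
  proof -
    have "\<forall>\<^sub>F n in sequentially. nu pX n \<gamma> < 1 - \<epsilon>"
      using nu_tendsto_zero[OF \<open>0 < \<gamma>\<close>] assms(3) by (intro order_tendstoD) auto
    with reliable_secure eventually_ge_at_top[of 1] show ?thesis
    proof eventually_elim
      case (elim n)
      then interpret block_system n pX pK "C1 n" "C2 n" "M1 n" "M2 n" "Enc1 n" "Enc2 n" "Dec n"
        "ph1 n" "ph2 n" "ps n" \<gamma> \<epsilon> \<delta>
        using system by unfold_locales (auto simp: nu_eps_def)
      show ?case using cond_entropy_fst_bound cond_entropy_snd_bound joint_entropy_bound by blast
    qed
  qed
  then show ?thesis by (simp add: eventually_sequentially)
qed

end
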